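(* For every $n\ge 1$ and every $t$ in $J$, $$L_n(t)=\frac1N\sum_{j=1}^{n}\frac{j}{N}\,\frac{d^2}{dt^2}\log L_{n-j}(t),$$ where the $j=n$ term uses $\log L_0(t)=NF(t)$.
   Context: Let $N>0$ be a fixed parameter. Let $\rho$ be a positive Borel measure on $\mathbb R$ with infinite support such that $M(t):=\int_{\mathbb R}e^{tN\epsilon}\,d\rho(\epsilon)$ is finite for all $t$ in an open interval $J$. Write $M(t)=\exp(NF(t))$. For $n\ge 0$ let $\Delta_n(t)=\det\big[M^{(i+j-2)}(t)\big]_{i,j=1}^{n+1}$ be the Hankel determinant of the derivatives of $M$, and set $\Delta_{-1}:=1$; these satisfy $\Delta_n(t)>0$. The Lanczos $L$-functions are defined by $L_0(t)=M(t)$ and, for $n\ge1$, $N^2L_n(t)=\Delta_n(t)\Delta_{n-2}(t)/\Delta_{n-1}(t)^2$. *)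

theory Defs
  imports "HOL-Probability.Probability" "Jordan_Normal_Form.Determinant"
begin

definition measure_support :: "real measure \<Rightarrow> real set" where
  "measure_support \<rho> = {x. \<forall>e>0. emeasure \<rho> (ball x e) > 0}"

definition mgf :: "real \<Rightarrow> real measure \<Rightarrow> real \<Rightarrow> real" where
  "mgf N \<rho> t = (\<integral>\<epsilon>. exp (t * N * \<epsilon>) \<partial>\<rho>)"

text \<open>hankel_det N rho k t is the k x k Hankel determinant
  det [M^(i+j)(t)]_{i,j=0..k-1}.  Thus Delta_n = hankel_det (n+1), and
  hankel_det 0 = 1 = Delta_{-1}.\<close>
definition hankel_det :: "real \<Rightarrow> real measure \<Rightarrow> nat \<Rightarrow> real \<Rightarrow> real" where
  "hankel_det N \<rho> k t =
     Determinant.det (mat k k (\<lambda>(i, j). (deriv ^^ (i + j)) (mgf N \<rho>) t))"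

fun lanczos_L :: "real \<Rightarrow> real measure \<Rightarrow> nat \<Rightarrow> real \<Rightarrow> real" where
  "lanczos_L N \<rho> 0 t = mgf N \<rho> t"
| "lanczos_L N \<rho> (Suc m) t =
     hankel_det N \<rho> (m + 2) t * hankel_det N \<rho> m t
       / (N\<^sup>2 * (hankel_det N \<rho> (m + 1) t)\<^sup>2)"

end

theory Submission
  imports Defs
begin

(* Write H k for the k x k Hankel determinant det [M^(i+j)]. Because the entries are successive
   derivatives, differentiating H (n+1) row by row leaves only the term that raises the last row,
   and differentiating that minor column by column again leaves one term; the quotient rule together
   with the Desnanot-Jacobi identity then gives

     (ln H k)'' = H (k+1) H (k-1) / (H k)^2 = N^2 L_k        (k >= 1),   (ln H 0)'' = 0.

   Since ln L_j = ln H (j+1) + ln H (j-1) - 2 ln H j + const, the second derivatives of ln L_j are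
   second differences of the sequence N^2 L_k, and the weighted sum in the theorem telescopes to
   N^2 L_n. The logarithms make sense because H k > 0: the moment matrix is positive definite,
   a nonzero polynomial vanishing only finitely often while the support of rho is infinite. *)

section \<open>Determinants\<close>

lemma det_mat_eq_sum_permutations:
  "Determinant.det (mat n n f) =
     (\<Sum>p | p permutes {0..<n}. signof p * (\<Prod>i<n. f (i, p i)))"
proof -
  have "Determinant.det (mat n n f) =
      (\<Sum>p | p permutes {0..<n}. signof p * (\<Prod>i=0..<n. mat n n f $$ (i, p i)))"
    by (rule det_def') simp
  also have "\<dots> = (\<Sum>p | p permutes {0..<n}. signof p * (\<Prod>i<n. f (i, p i)))"
    by (intro sum.cong refl arg_cong2[where f = "(*)"] prod.cong)
       (auto simp: atLeast0LessThan permutes_in_image)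
  finally show ?thesis .
qed

lemma has_field_derivative_det_mat:
  fixes e e' :: "nat \<Rightarrow> nat \<Rightarrow> 'a :: real_normed_field \<Rightarrow> 'a"
  assumes "\<And>i j. i < n \<Longrightarrow> j < n \<Longrightarrow> (e i j has_field_derivative e' i j x) (at x)"
  shows "((\<lambda>s. Determinant.det (mat n n (\<lambda>(i, j). e i j s))) has_field_derivative
     (\<Sum>r<n. Determinant.det (mat n n (\<lambda>(i, j). if i = r then e' i j x else e i j x)))) (at x)"
proof -
  let ?P = "{p. p permutes {0..<n}}"
  have "((\<lambda>s. \<Sum>p\<in>?P. signof p * (\<Prod>i<n. e i (p i) s)) has_field_derivative
      (\<Sum>p\<in>?P. signof p * (\<Sum>r<n. e' r (p r) x * (\<Prod>i\<in>{..<n} - {r}. e i (p i) x)))) (at x)"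
    by (intro DERIV_sum DERIV_cmult has_field_derivative_prod)
       (use assms permutes_in_image in fastforce)
  also have "(\<Sum>p\<in>?P. signof p * (\<Sum>r<n. e' r (p r) x * (\<Prod>i\<in>{..<n} - {r}. e i (p i) x)))
      = (\<Sum>r<n. \<Sum>p\<in>?P. signof p * (\<Prod>i<n. if i = r then e' i (p i) x else e i (p i) x))"
    by (subst sum.swap, simp add: sum_distrib_left prod.If_cases Int_absorb1 Diff_eq)
  finally show ?thesis
    by (simp add: det_mat_eq_sum_permutations)
qed

lemma det_last_column_unit:
  fixes Q :: "'a :: comm_ring_1 mat"
  assumes Q: "Q \<in> carrier_mat (Suc m) (Suc m)"
    and last_col: "\<And>i. i < Suc m \<Longrightarrow> Q $$ (i, m) = (if i = m then d else 0)"
  shows "Determinant.det Q = d * Determinant.det (mat m m (\<lambda>ij. Q $$ ij))"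
proof -
  have "Determinant.det Q = (\<Sum>i<Suc m. Q $$ (i, m) * cofactor Q i m)"
    by (rule laplace_expansion_column[OF Q]) simp
  also have "\<dots> = d * Determinant.det (mat_delete Q m m)"
    by (simp add: last_col cofactor_def)
  also have "mat_delete Q m m = mat m m (\<lambda>ij. Q $$ ij)"
    using Q by (auto simp: mat_delete_def)
  finally show ?thesis .
qed

lemma det_unit_leading_columns:
  fixes B :: "'a :: comm_ring_1 mat"
  assumes "B \<in> carrier_mat (n + 2) (n + 2)"
    and "\<And>i j. i < n + 2 \<Longrightarrow> j < n \<Longrightarrow> B $$ (i, j) = (if i = j then 1 else 0)"
  shows "Determinant.det B = B $$ (n, n) * B $$ (n + 1, n + 1) - B $$ (n, n + 1) * B $$ (n + 1, n)"
  using assms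
proof (induction n arbitrary: B)
  case 0
  then have B: "B \<in> carrier_mat (Suc (Suc 0)) (Suc (Suc 0))"
    by (simp add: numeral_2_eq_2)
  have "Determinant.det B = B $$ (0, 0) * cofactor B 0 0 + B $$ (1, 0) * cofactor B 1 0"
    by (subst laplace_expansion_column[OF B, of 0]) auto
  moreover have "cofactor B 0 0 = B $$ (1, 1)" "cofactor B 1 0 = - B $$ (0, 1)"
    unfolding cofactor_def using B by (subst det_single; force simp: mat_delete_def)+
  ultimately show ?case
    by simp
next
  case (Suc n)
  have B: "B \<in> carrier_mat (Suc (n + 2)) (Suc (n + 2))"
    using Suc.prems by simp
  have "Determinant.det B = (\<Sum>i<Suc (n + 2). B $$ (i, 0) * cofactor B i 0)"
    by (rule laplace_expansion_column[OF B]) simp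
  also have "\<dots> = (\<Sum>i<Suc (n + 2). if i = 0 then cofactor B 0 0 else 0)"
    by (rule sum.cong) (auto simp: Suc.prems)
  also have "\<dots> = Determinant.det (mat_delete B 0 0)"
    by (simp add: cofactor_def)
  also have "\<dots> = mat_delete B 0 0 $$ (n, n) * mat_delete B 0 0 $$ (n + 1, n + 1)
      - mat_delete B 0 0 $$ (n, n + 1) * mat_delete B 0 0 $$ (n + 1, n)"
    by (rule Suc.IH) (use B in \<open>auto simp: mat_delete_def Suc.prems\<close>)
  finally show ?case
    using B by (simp add: mat_delete_def)
qed

text \<open>Multiply A by its adjugate with the first n columns replaced by unit vectors: the
  product has determinant d^2 times the leading n \<times> n minor, while the modified adjugate
  has determinant equal to the 2 \<times> 2 minor of cofactors in rows and columns n, n+1.\<close>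
theorem desnanot_jacobi:
  fixes A :: "'a :: idom mat"
  assumes A: "A \<in> carrier_mat (n + 2) (n + 2)" and det_A: "Determinant.det A \<noteq> 0"
  shows "Determinant.det A * Determinant.det (mat n n (\<lambda>ij. A $$ ij)) =
    Determinant.det (mat_delete A n n) * Determinant.det (mat_delete A (n + 1) (n + 1))
    - Determinant.det (mat_delete A n (n + 1)) * Determinant.det (mat_delete A (n + 1) n)"
proof -
  define d where "d = Determinant.det A"
  define C where "C = adj_mat A"
  have C: "C \<in> carrier_mat (n + 2) (n + 2)" and AC: "A * C = d \<cdot>\<^sub>m 1\<^sub>m (n + 2)"
    using adj_mat[OF A] by (auto simp: C_def d_def)
  define B where
    "B = mat (n + 2) (n + 2) (\<lambda>(i, j). if j < n then (if i = j then 1 else 0) else C $$ (i, j))"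
  have B: "B \<in> carrier_mat (n + 2) (n + 2)"
    by (simp add: B_def)
  have AB_last: "(A * B) $$ (i, j) = (if i = j then d else 0)"
    if "i < n + 2" "j < n + 2" "\<not> j < n" for i j
  proof -
    have "(A * B) $$ (i, j) = (A * C) $$ (i, j)"
      using that A C by (simp add: B_def scalar_prod_def)
    then show ?thesis
      using that by (simp add: AC)
  qed
  have AB_first: "(A * B) $$ (i, j) = A $$ (i, j)" if "i < n + 2" "j < n" for i j
  proof -
    have "(A * B) $$ (i, j) = (\<Sum>k = 0..<n + 2. A $$ (i, k) * (if k = j then 1 else 0))"
      using that A by (simp add: B_def scalar_prod_def cong: if_cong)
    then show ?thesis
      using that by (simp add: if_distrib cong: if_cong)
  qed
  have AB: "A * B \<in> carrier_mat (Suc (Suc n)) (Suc (Suc n))"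
    using A B by auto
  have "d * Determinant.det B = Determinant.det (A * B)"
    using det_mult[OF A B] by (simp add: d_def)
  also have "\<dots> = d * Determinant.det (mat (Suc n) (Suc n) (\<lambda>ij. (A * B) $$ ij))"
    by (rule det_last_column_unit[OF AB]) (auto simp: AB_last)
  also have "Determinant.det (mat (Suc n) (Suc n) (\<lambda>ij. (A * B) $$ ij))
      = d * Determinant.det (mat n n (\<lambda>ij. A $$ ij))"
  proof (subst det_last_column_unit)
    show "mat (Suc n) (Suc n) (\<lambda>ij. (A * B) $$ ij) $$ (i, n) = (if i = n then d else 0)"
      if "i < Suc n" for i
      using that by (simp add: AB_last)
    have "mat n n (\<lambda>ij. mat (Suc n) (Suc n) (\<lambda>ij. (A * B) $$ ij) $$ ij) = mat n n (\<lambda>ij. A $$ ij)"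
      by (rule eq_matI) (auto simp: AB_first)
    then show "d * Determinant.det (mat n n (\<lambda>ij. mat (Suc n) (Suc n) (\<lambda>ij. (A * B) $$ ij) $$ ij))
        = d * Determinant.det (mat n n (\<lambda>ij. A $$ ij))"
      by simp
  qed simp
  finally have "Determinant.det B = d * Determinant.det (mat n n (\<lambda>ij. A $$ ij))"
    using det_A by (simp add: d_def)
  moreover have "C $$ (i, j) = cofactor A j i" if "i < n + 2" "j < n + 2" for i j
    using that A by (simp add: C_def adj_mat_def)
  then have "Determinant.det B =
      Determinant.det (mat_delete A n n) * Determinant.det (mat_delete A (n + 1) (n + 1))
    - Determinant.det (mat_delete A n (n + 1)) * Determinant.det (mat_delete A (n + 1) n)"
    by (subst det_unit_leading_columns[OF B]) (auto simp: B_def cofactor_def)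
  ultimately show ?thesis
    by (simp add: d_def)
qed

lemma scalar_prod_mult_mat_vec:
  assumes "M \<in> carrier_mat k k" and "v \<in> carrier_vec k"
  shows "v \<bullet> (M *\<^sub>v v) = (\<Sum>i<k. \<Sum>j<k. v $ i * M $$ (i, j) * v $ j)"
  using assms by (simp add: scalar_prod_def sum_distrib_left atLeast0LessThan mult.assoc)

text \<open>Along the segment from the identity to A every matrix is positive definite, hence
  nonsingular, so the determinant cannot change sign.\<close>
lemma det_pos_if_quadratic_form_pos:
  fixes A :: "real mat"
  assumes A: "A \<in> carrier_mat k k"
    and pos: "\<And>v. v \<in> carrier_vec k \<Longrightarrow> v \<noteq> 0\<^sub>v k \<Longrightarrow> v \<bullet> (A *\<^sub>v v) > 0"
  shows "Determinant.det A > 0"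
proof -
  define B where "B l = mat k k (\<lambda>(i, j). (1 - l) * (if i = j then 1 else 0) + l * A $$ (i, j))"
    for l :: real
  have B: "B l \<in> carrier_mat k k" for l
    by (simp add: B_def)
  have "Determinant.det (B l) \<noteq> 0" if "0 \<le> l" "l \<le> 1" for l
  proof
    assume "Determinant.det (B l) = 0"
    then obtain v where v: "v \<in> carrier_vec k" "v \<noteq> 0\<^sub>v k" "B l *\<^sub>v v = 0\<^sub>v k"
      using det_0_iff_vec_prod_zero[OF B] by blast
    then obtain i0 where "i0 < k" "v $ i0 \<noteq> 0"
      by (metis eq_vecI carrier_vecD index_zero_vec)
    then have "0 < (\<Sum>i<k. v $ i * v $ i)"
      by (intro sum_pos2[where i = i0]) (auto simp: zero_less_mult_iff)
    moreover have "0 < v \<bullet> (A *\<^sub>v v)"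
      using pos v by blast
    moreover have "v \<bullet> (B l *\<^sub>v v) = (1 - l) * (\<Sum>i<k. v $ i * v $ i) + l * (v \<bullet> (A *\<^sub>v v))"
    proof -
      have "v \<bullet> (B l *\<^sub>v v) = (\<Sum>i<k. \<Sum>j<k.
          (if i = j then (1 - l) * (v $ i * v $ j) else 0) + l * (v $ i * A $$ (i, j) * v $ j))"
        unfolding scalar_prod_mult_mat_vec[OF B v(1)]
        by (intro sum.cong refl) (simp add: B_def algebra_simps)
      then show ?thesis
        by (simp add: scalar_prod_mult_mat_vec[OF A v(1)] sum.distrib sum_distrib_left)
    qed
    ultimately have "0 < v \<bullet> (B l *\<^sub>v v)"
      using that by (cases "l = 0") (auto intro: add_nonneg_pos)
    with v(1,3) show False
      by simp
  qed
  moreover have "continuous_on {0..1} (\<lambda>l. Determinant.det (B l))"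
    unfolding B_def det_mat_eq_sum_permutations by (simp, intro continuous_intros)
  moreover have "B 0 = 1\<^sub>m k" "B 1 = A"
    using A by (auto simp: B_def intro!: eq_matI)
  ultimately show ?thesis
    using IVT2'[of "\<lambda>l. Determinant.det (B l)" 1 0 0] by force
qed

section \<open>Hankel minors\<close>

text \<open>When m p is the p-th derivative of a function, the first and second derivatives
  of the Hankel determinant hankel_minor m (n + 1) id id are hankel_minor m (n + 1) (skip n) id
  and hankel_minor m (n + 1) (skip n) (skip n).\<close>
definition hankel_minor ::
    "(nat \<Rightarrow> 'a :: comm_ring_1) \<Rightarrow> nat \<Rightarrow> (nat \<Rightarrow> nat) \<Rightarrow> (nat \<Rightarrow> nat) \<Rightarrow> 'a"
  where "hankel_minor m k r c = Determinant.det (mat k k (\<lambda>(i, j). m (r i + c j)))"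

definition skip :: "nat \<Rightarrow> nat \<Rightarrow> nat"
  where "skip n i = (if i < n then i else Suc i)"

lemma hankel_minor_cong:
  "(\<And>i. i < k \<Longrightarrow> r i = r' i) \<Longrightarrow> (\<And>j. j < k \<Longrightarrow> c j = c' j) \<Longrightarrow>
    hankel_minor m k r c = hankel_minor m k r' c'"
  unfolding hankel_minor_def by (intro arg_cong[of _ _ Determinant.det] eq_matI) auto

lemma hankel_minor_commute: "hankel_minor m k r c = hankel_minor m k c r"
proof -
  have "transpose_mat (mat k k (\<lambda>(i, j). m (r i + c j))) = mat k k (\<lambda>(i, j). m (c i + r j))"
    by (rule eq_matI) (auto simp: add.commute)
  then show ?thesis
    unfolding hankel_minor_def by (metis det_transpose mat_carrier)
qed

lemma hankel_minor_eq_rows: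
  "i < k \<Longrightarrow> i' < k \<Longrightarrow> i \<noteq> i' \<Longrightarrow> r i = r i' \<Longrightarrow> hankel_minor m k r c = 0"
  unfolding hankel_minor_def
  by (rule det_identical_rows[where i = i and j = i']) (auto intro!: eq_vecI)

lemma hankel_desnanot_jacobi:
  fixes m :: "nat \<Rightarrow> 'a :: idom"
  assumes "hankel_minor m (n + 2) id id \<noteq> 0"
  shows "hankel_minor m (n + 2) id id * hankel_minor m n id id =
    hankel_minor m (Suc n) (skip n) (skip n) * hankel_minor m (Suc n) id id
    - (hankel_minor m (Suc n) (skip n) id)\<^sup>2"
proof -
  define A where "A = mat (n + 2) (n + 2) (\<lambda>(i, j). m (i + j))"
  have A: "A \<in> carrier_mat (n + 2) (n + 2)"
    by (simp add: A_def)
  have minors: "Determinant.det (mat n n (\<lambda>ij. A $$ ij)) = hankel_minor m n id id"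
    "Determinant.det (mat_delete A n n) = hankel_minor m (Suc n) (skip n) (skip n)"
    "Determinant.det (mat_delete A (n + 1) (n + 1)) = hankel_minor m (Suc n) id id"
    "Determinant.det (mat_delete A n (n + 1)) = hankel_minor m (Suc n) (skip n) id"
    "Determinant.det (mat_delete A (n + 1) n) = hankel_minor m (Suc n) id (skip n)"
    "Determinant.det A = hankel_minor m (n + 2) id id"
    unfolding hankel_minor_def
    by (auto intro!: arg_cong[of _ _ Determinant.det] eq_matI simp: A_def mat_delete_def skip_def)
  have "hankel_minor m (n + 2) id id * hankel_minor m n id id =
    hankel_minor m (Suc n) (skip n) (skip n) * hankel_minor m (Suc n) id id
    - hankel_minor m (Suc n) (skip n) id * hankel_minor m (Suc n) id (skip n)"
    using desnanot_jacobi[OF A] assms unfolding minors by blast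
  then show ?thesis
    unfolding power2_eq_square hankel_minor_commute[of m "Suc n" id "skip n"] .
qed

lemma has_field_derivative_hankel_minor:
  fixes m :: "nat \<Rightarrow> 'a :: real_normed_field \<Rightarrow> 'a"
  assumes "\<And>p. (m p has_field_derivative m (Suc p) x) (at x)"
  shows "((\<lambda>s. hankel_minor (\<lambda>p. m p s) k r c) has_field_derivative
      (\<Sum>i<k. hankel_minor (\<lambda>p. m p x) k (r(i := Suc (r i))) c)) (at x)"
proof -
  have "((\<lambda>s. hankel_minor (\<lambda>p. m p s) k r c) has_field_derivative
      (\<Sum>i<k. Determinant.det (mat k k
        (\<lambda>(a, j). if a = i then m (Suc (r a + c j)) x else m (r a + c j) x)))) (at x)"
    unfolding hankel_minor_def by (rule has_field_derivative_det_mat) (rule assms)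
  also have "(\<Sum>i<k. Determinant.det (mat k k
        (\<lambda>(a, j). if a = i then m (Suc (r a + c j)) x else m (r a + c j) x)))
      = (\<Sum>i<k. hankel_minor (\<lambda>p. m p x) k (r(i := Suc (r i))) c)"
    unfolding hankel_minor_def by (intro sum.cong refl arg_cong[of _ _ Determinant.det] eq_matI) auto
  finally show ?thesis .
qed

text \<open>Raising any row index but the last one duplicates the next row.\<close>
lemma sum_hankel_minor_raise_row:
  "(\<Sum>i<Suc n. hankel_minor m (Suc n) (id(i := Suc i)) c) = hankel_minor m (Suc n) (skip n) c"
proof -
  have "(\<Sum>i<n. hankel_minor m (Suc n) (id(i := Suc i)) c) = 0"
    by (intro sum.neutral ballI hankel_minor_eq_rows[where i = i and i' = "Suc i" for i]) auto
  moreover have "hankel_minor m (Suc n) (id(n := Suc n)) c = hankel_minor m (Suc n) (skip n) c"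
    by (rule hankel_minor_cong) (auto simp: skip_def)
  ultimately show ?thesis
    by simp
qed

lemma has_field_derivative_hankel_det:
  fixes m :: "nat \<Rightarrow> 'a :: real_normed_field \<Rightarrow> 'a"
  assumes "\<And>p. (m p has_field_derivative m (Suc p) x) (at x)"
  shows "((\<lambda>s. hankel_minor (\<lambda>p. m p s) (Suc n) id id) has_field_derivative
      hankel_minor (\<lambda>p. m p x) (Suc n) (skip n) id) (at x)"
  using has_field_derivative_hankel_minor[of m x "Suc n" id id, OF assms]
  by (simp only: sum_hankel_minor_raise_row id_apply)

lemma has_field_derivative_hankel_minor_skip:
  fixes m :: "nat \<Rightarrow> 'a :: real_normed_field \<Rightarrow> 'a"
  assumes "\<And>p. (m p has_field_derivative m (Suc p) x) (at x)"
  shows "((\<lambda>s. hankel_minor (\<lambda>p. m p s) (Suc n) (skip n) id) has_field_derivative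
      hankel_minor (\<lambda>p. m p x) (Suc n) (skip n) (skip n)) (at x)"
  using has_field_derivative_hankel_minor[of m x "Suc n" id "skip n", OF assms]
  by (simp only: hankel_minor_commute[of _ _ "skip n" id] sum_hankel_minor_raise_row id_apply)

lemma power_div_fact_le_exp:
  fixes y :: real
  assumes "0 \<le> y"
  shows "y ^ q / fact q \<le> exp y"
proof -
  have "(\<lambda>n. y ^ n /\<^sub>R fact n) sums exp y"
    by (rule exp_converges)
  moreover have "(\<Sum>n\<in>{q}. y ^ n /\<^sub>R fact n) \<le> (\<Sum>n. y ^ n /\<^sub>R fact n)"
    by (rule sum_le_suminf) (use assms in \<open>auto simp: summable_exp\<close>)
  ultimately show ?thesis
    by (simp add: sums_iff divide_inverse mult.commute)
qed

text \<open>A polynomial weight is absorbed by enlarging the exponential rate from \<bar>u - t\<bar> \<le> \<delta>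
  to 2\<delta>, using \<delta>^q \<bar>x\<bar>^q / q! \<le> exp (\<delta> \<bar>x\<bar>).\<close>
lemma abs_power_mult_exp_le:
  fixes x u t \<delta> :: real
  assumes "0 < \<delta>" and "\<bar>u - t\<bar> \<le> \<delta>"
  shows "\<bar>x ^ q * exp (u * x)\<bar> \<le> fact q / \<delta> ^ q * (exp ((t + 2 * \<delta>) * x) + exp ((t - 2 * \<delta>) * x))"
proof -
  have "(\<delta> * \<bar>x\<bar>) ^ q / fact q \<le> exp (\<delta> * \<bar>x\<bar>)"
    by (rule power_div_fact_le_exp) (use assms in simp)
  then have power: "\<bar>x\<bar> ^ q \<le> fact q / \<delta> ^ q * exp (\<delta> * \<bar>x\<bar>)"
    using assms by (simp add: power_mult_distrib field_simps)
  have "u * x + \<delta> * \<bar>x\<bar> \<le> (t + 2 * \<delta>) * x \<or> u * x + \<delta> * \<bar>x\<bar> \<le> (t - 2 * \<delta>) * x"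
  proof (cases "0 \<le> x")
    case True
    then have "u * x \<le> (t + \<delta>) * x"
      using assms(2) by (intro mult_right_mono) auto
    then show ?thesis
      using True by (simp add: algebra_simps)
  next
    case False
    then have "u * x \<le> (t - \<delta>) * x"
      using assms(2) by (intro mult_right_mono_neg) auto
    then show ?thesis
      using False by (simp add: algebra_simps)
  qed
  then have exp_bound:
      "exp (u * x) * exp (\<delta> * \<bar>x\<bar>) \<le> exp ((t + 2 * \<delta>) * x) + exp ((t - 2 * \<delta>) * x)"
    unfolding exp_add[symmetric]
    by (metis add_increasing add_increasing2 exp_ge_zero exp_le_cancel_iff)
  have "\<bar>x ^ q * exp (u * x)\<bar> = \<bar>x\<bar> ^ q * exp (u * x)"
    by (simp add: abs_mult power_abs)
  also have "\<dots> \<le> fact q / \<delta> ^ q * exp (\<delta> * \<bar>x\<bar>) * exp (u * x)"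
    by (rule mult_right_mono[OF power]) simp
  also have "\<dots> \<le> fact q / \<delta> ^ q * (exp ((t + 2 * \<delta>) * x) + exp ((t - 2 * \<delta>) * x))"
    using mult_left_mono[OF exp_bound, of "fact q / \<delta> ^ q"] assms(1) by (simp add: mult_ac)
  finally show ?thesis .
qed

text \<open>Differentiation under the integral sign, by dominated convergence of the difference
  quotients; the mean value theorem bounds them by the dominating function w.\<close>
lemma has_real_derivative_integral:
  fixes f f' :: "real \<Rightarrow> 'a \<Rightarrow> real"
  assumes "0 < \<delta>"
    and integrable: "\<And>s. s \<in> ball t \<delta> \<Longrightarrow> integrable M (f s)"
    and deriv: "\<And>s x. s \<in> ball t \<delta> \<Longrightarrow> x \<in> space M \<Longrightarrow>
      ((\<lambda>s. f s x) has_real_derivative f' s x) (at s)"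
    and bound: "\<And>s x. s \<in> ball t \<delta> \<Longrightarrow> x \<in> space M \<Longrightarrow> \<bar>f' s x\<bar> \<le> w x"
    and w: "integrable M w" and measurable: "f' t \<in> borel_measurable M"
  shows "((\<lambda>s. \<integral>x. f s x \<partial>M) has_real_derivative (\<integral>x. f' t x \<partial>M)) (at t)"
proof -
  have t: "t \<in> ball t \<delta>"
    using \<open>0 < \<delta>\<close> by simp
  have lipschitz: "\<bar>f s x - f t x\<bar> \<le> w x * \<bar>s - t\<bar>" if "s \<in> ball t \<delta>" "x \<in> space M" for s x
    using field_differentiable_bound[of "ball t \<delta>" "\<lambda>s. f s x" "\<lambda>s. f' s x" "w x" s t]
      deriv bound that t by (auto intro: has_field_derivative_at_within)
  define q where "q s x = (f s x - f t x) / (s - t)" for s x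
  have "((\<lambda>s. ((\<integral>x. f s x \<partial>M) - (\<integral>x. f t x \<partial>M)) / (s - t)) \<longlongrightarrow> (\<integral>x. f' t x \<partial>M))
      (at t within ball t \<delta>)"
    unfolding tendsto_at_iff_sequentially comp_def
  proof (intro allI impI)
    fix X :: "nat \<Rightarrow> real"
    assume X: "\<forall>i. X i \<in> ball t \<delta> - {t}" and "X \<longlonglongrightarrow> t"
    then have X_at: "filterlim X (at t) sequentially"
      by (auto simp: filterlim_at)
    have "(\<lambda>i. \<integral>x. q (X i) x \<partial>M) \<longlonglongrightarrow> (\<integral>x. f' t x \<partial>M)"
    proof (rule integral_dominated_convergence[where w = w])
      show "AE x in M. (\<lambda>i. q (X i) x) \<longlonglongrightarrow> f' t x"
      proof (rule AE_I2)
        fix x assume "x \<in> space M"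
        then have "((\<lambda>s. q s x) \<longlongrightarrow> f' t x) (at t)"
          using deriv[OF t] by (simp add: q_def has_field_derivative_iff)
        then show "(\<lambda>i. q (X i) x) \<longlonglongrightarrow> f' t x"
          using X_at by (rule filterlim_compose)
      qed
      show "AE x in M. norm (q (X i) x) \<le> w x" for i
        using lipschitz X by (auto simp: q_def abs_divide divide_le_eq)
    qed (use X integrable t w measurable in \<open>auto simp: q_def\<close>)
    moreover have "(\<integral>x. q (X i) x \<partial>M) = ((\<integral>x. f (X i) x \<partial>M) - (\<integral>x. f t x \<partial>M)) / (X i - t)" for i
      using X integrable t by (simp add: q_def)
    ultimately show "(\<lambda>i. ((\<integral>x. f (X i) x \<partial>M) - (\<integral>x. f t x \<partial>M)) / (X i - t))
        \<longlonglongrightarrow> (\<integral>x. f' t x \<partial>M)"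
      by simp
  qed
  then show ?thesis
    by (simp add: has_field_derivative_iff at_within_open[OF t open_ball])
qed

lemma deriv2_eqI:
  fixes f f' :: "'a :: real_normed_field \<Rightarrow> 'a"
  assumes "open S" and "t \<in> S"
    and "\<And>s. s \<in> S \<Longrightarrow> (f has_field_derivative f' s) (at s)"
    and "(f' has_field_derivative f'') (at t)"
  shows "deriv (deriv f) t = f''"
proof -
  have "\<forall>\<^sub>F s in nhds t. deriv f s = f' s"
    using eventually_nhds_in_open[OF assms(1,2)]
    by (rule eventually_mono) (rule DERIV_imp_deriv[OF assms(3)])
  then have "deriv (deriv f) t = deriv f' t"
    by (rule deriv_cong_ev) simp
  with DERIV_imp_deriv[OF assms(4)] show ?thesis
    by simp
qed

section \<open>Exponential moments\<close>

locale exp_moments =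
  fixes N :: real and \<rho> :: "real measure" and J :: "real set"
  assumes sets_\<rho>: "sets \<rho> = sets borel"
    and open_J: "open J"
    and integrable_exp: "\<And>s. s \<in> J \<Longrightarrow> integrable \<rho> (\<lambda>\<epsilon>. exp (s * N * \<epsilon>))"
begin

definition moment :: "nat \<Rightarrow> real \<Rightarrow> real"
  where "moment p s = (\<integral>\<epsilon>. (N * \<epsilon>) ^ p * exp (s * N * \<epsilon>) \<partial>\<rho>)"

lemma space_\<rho>: "space \<rho> = UNIV"
  using sets_eq_imp_space_eq[OF sets_\<rho>] by simp

lemma moment_integrand_measurable: "(\<lambda>\<epsilon>. (N * \<epsilon>) ^ p * exp (s * N * \<epsilon>)) \<in> borel_measurable \<rho>"
proof -
  have "(\<lambda>\<epsilon>. (N * \<epsilon>) ^ p * exp (s * N * \<epsilon>)) \<in> borel_measurable borel"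
    by measurable
  then show ?thesis
    using measurable_cong_sets[OF sets_\<rho> refl] by blast
qed

lemma moment_integrand_dominated:
  assumes "s \<in> J"
  obtains \<delta> w where "0 < \<delta>" "ball s \<delta> \<subseteq> J" "integrable \<rho> w"
    "\<And>u \<epsilon>. u \<in> ball s \<delta> \<Longrightarrow> \<bar>(N * \<epsilon>) ^ p * exp (u * N * \<epsilon>)\<bar> \<le> w \<epsilon>"
proof -
  obtain e where "0 < e" "ball s e \<subseteq> J"
    using open_J assms open_contains_ball by blast
  define \<delta> where "\<delta> = e / 3"
  have "0 < \<delta>" "ball s (3 * \<delta>) \<subseteq> J"
    using \<open>0 < e\<close> \<open>ball s e \<subseteq> J\<close> by (simp_all add: \<delta>_def)
  then have \<delta>: "0 < \<delta>" "ball s \<delta> \<subseteq> J" "s + 2 * \<delta> \<in> J" "s - 2 * \<delta> \<in> J"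
    by (auto simp: subset_iff dist_real_def)
  define w where
    "w \<epsilon> = fact p / \<delta> ^ p * (exp ((s + 2 * \<delta>) * N * \<epsilon>) + exp ((s - 2 * \<delta>) * N * \<epsilon>))" for \<epsilon>
  have w: "integrable \<rho> w"
    unfolding w_def using integrable_exp[OF \<delta>(3)] integrable_exp[OF \<delta>(4)]
    by (intro integrable_mult_right Bochner_Integration.integrable_add)
  have bound: "\<bar>(N * \<epsilon>) ^ p * exp (u * N * \<epsilon>)\<bar> \<le> w \<epsilon>" if "u \<in> ball s \<delta>" for u \<epsilon>
  proof -
    have "\<bar>u - s\<bar> \<le> \<delta>"
      using that by (auto simp: dist_real_def abs_diff_le_iff abs_diff_less_iff)
    from abs_power_mult_exp_le[OF \<delta>(1) this, where x = "N * \<epsilon>" and q = p] show ?thesis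
      by (simp add: w_def mult.assoc)
  qed
  show ?thesis
    by (rule that[OF \<delta>(1,2) w bound])
qed

lemma integrable_moment_integrand:
  assumes "s \<in> J"
  shows "integrable \<rho> (\<lambda>\<epsilon>. (N * \<epsilon>) ^ p * exp (s * N * \<epsilon>))"
proof -
  obtain \<delta> w where "0 < \<delta>" "ball s \<delta> \<subseteq> J" "integrable \<rho> w"
    and bound: "\<And>u \<epsilon>. u \<in> ball s \<delta> \<Longrightarrow> \<bar>(N * \<epsilon>) ^ p * exp (u * N * \<epsilon>)\<bar> \<le> w \<epsilon>"
    using moment_integrand_dominated[OF assms, where p = p] by blast
  have "s \<in> ball s \<delta>"
    using \<open>0 < \<delta>\<close> by simp
  then have "norm ((N * \<epsilon>) ^ p * exp (s * N * \<epsilon>)) \<le> norm (w \<epsilon>)" for \<epsilon>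
    using bound by (metis abs_ge_self order_trans real_norm_def)
  then show ?thesis
    by (intro Bochner_Integration.integrable_bound[OF \<open>integrable \<rho> w\<close> moment_integrand_measurable]
        AE_I2)
qed

lemma has_real_derivative_moment:
  assumes "s \<in> J"
  shows "(moment p has_real_derivative moment (Suc p) s) (at s)"
proof -
  obtain \<delta> w where \<delta>: "0 < \<delta>" "ball s \<delta> \<subseteq> J" and "integrable \<rho> w"
    and bound: "\<And>u \<epsilon>. u \<in> ball s \<delta> \<Longrightarrow> \<bar>(N * \<epsilon>) ^ Suc p * exp (u * N * \<epsilon>)\<bar> \<le> w \<epsilon>"
    using moment_integrand_dominated[OF assms, where p = "Suc p"] by blast
  have "((\<lambda>u. \<integral>\<epsilon>. (N * \<epsilon>) ^ p * exp (u * N * \<epsilon>) \<partial>\<rho>) has_real_derivative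
      (\<integral>\<epsilon>. (N * \<epsilon>) ^ Suc p * exp (s * N * \<epsilon>) \<partial>\<rho>)) (at s)"
  proof (rule has_real_derivative_integral[where \<delta> = \<delta> and w = w])
    show "((\<lambda>u. (N * \<epsilon>) ^ p * exp (u * N * \<epsilon>)) has_real_derivative
        (N * \<epsilon>) ^ Suc p * exp (u * N * \<epsilon>)) (at u)" for u \<epsilon>
      by (auto intro!: derivative_eq_intros simp: algebra_simps)
    show "integrable \<rho> (\<lambda>\<epsilon>. (N * \<epsilon>) ^ p * exp (u * N * \<epsilon>))" if "u \<in> ball s \<delta>" for u
      using that \<delta> by (blast intro: integrable_moment_integrand)
    show "(\<lambda>\<epsilon>. (N * \<epsilon>) ^ Suc p * exp (s * N * \<epsilon>)) \<in> borel_measurable \<rho>"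
      by (rule moment_integrand_measurable)
    show "\<bar>(N * \<epsilon>) ^ Suc p * exp (u * N * \<epsilon>)\<bar> \<le> w \<epsilon>" if "u \<in> ball s \<delta>" for u \<epsilon>
      using bound[OF that] .
  qed fact+
  then show ?thesis
    unfolding moment_def[abs_def] .
qed

lemma higher_deriv_mgf:
  assumes "s \<in> J"
  shows "(deriv ^^ p) (mgf N \<rho>) s = moment p s"
  using assms
proof (induction p arbitrary: s)
  case 0
  then show ?case
    by (simp add: mgf_def moment_def)
next
  case (Suc p)
  have "\<forall>\<^sub>F u in nhds s. (deriv ^^ p) (mgf N \<rho>) u = moment p u"
    using eventually_nhds_in_open[OF open_J Suc.prems] by (rule eventually_mono) (rule Suc.IH)
  then have "deriv ((deriv ^^ p) (mgf N \<rho>)) s = deriv (moment p) s"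
    by (rule deriv_cong_ev) simp
  then show ?case
    using DERIV_imp_deriv[OF has_real_derivative_moment[OF Suc.prems]] by simp
qed

end

locale exp_moments_infinite_support = exp_moments +
  assumes N_nonzero: "N \<noteq> 0"
    and infinite_support: "infinite (measure_support \<rho>)"
begin

text \<open>The quadratic form is the integral of a squared polynomial in N \<epsilon> against the positive
  weight exp (s N \<epsilon>); a nonzero polynomial has finitely many roots, and every neighbourhood of
  the infinitely many support points outside them has positive measure.\<close>
lemma moment_quadratic_form_pos:
  assumes s: "s \<in> J" and "i0 < k" "c i0 \<noteq> 0"
  shows "(\<Sum>i<k. \<Sum>j<k. c i * c j * moment (i + j) s) > 0"
proof -
  define P where "P \<epsilon> = (\<Sum>i<k. c i * (N * \<epsilon>) ^ i)" for \<epsilon>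
  define g where "g \<epsilon> = (P \<epsilon>)\<^sup>2 * exp (s * N * \<epsilon>)" for \<epsilon>
  have g_sum: "g = (\<lambda>\<epsilon>. \<Sum>i<k. \<Sum>j<k. c i * c j * ((N * \<epsilon>) ^ (i + j) * exp (s * N * \<epsilon>)))"
  proof
    fix \<epsilon>
    have "g \<epsilon> = (\<Sum>i<k. \<Sum>j<k. (c i * (N * \<epsilon>) ^ i) * (c j * (N * \<epsilon>) ^ j)) * exp (s * N * \<epsilon>)"
      unfolding g_def P_def power2_eq_square by (simp only: sum_product)
    also have "\<dots> = (\<Sum>i<k. \<Sum>j<k. (c i * (N * \<epsilon>) ^ i) * (c j * (N * \<epsilon>) ^ j) * exp (s * N * \<epsilon>))"
      by (simp add: sum_distrib_right)
    finally show "g \<epsilon> = (\<Sum>i<k. \<Sum>j<k. c i * c j * ((N * \<epsilon>) ^ (i + j) * exp (s * N * \<epsilon>)))"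
      by (simp add: power_add mult_ac)
  qed
  have g_nonneg: "0 \<le> g \<epsilon>" for \<epsilon>
    by (simp add: g_def)
  have g_integrable: "integrable \<rho> g"
    unfolding g_sum by (intro Bochner_Integration.integrable_sum integrable_mult_right
        integrable_moment_integrand[OF s])
  have "(\<integral>\<epsilon>. g \<epsilon> \<partial>\<rho>) = (\<Sum>i<k. \<Sum>j<k. c i * c j * moment (i + j) s)"
    unfolding g_sum moment_def by (simp add: integrable_moment_integrand[OF s])
  moreover have "(\<integral>\<epsilon>. g \<epsilon> \<partial>\<rho>) \<noteq> 0"
  proof
    assume "(\<integral>\<epsilon>. g \<epsilon> \<partial>\<rho>) = 0"
    then have g_zero: "AE \<epsilon> in \<rho>. g \<epsilon> = 0"
      using integral_nonneg_eq_0_iff_AE[OF g_integrable] g_nonneg by simp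
    have "P = (\<lambda>\<epsilon>. \<Sum>i\<le>k - 1. (c i * N ^ i) * \<epsilon> ^ i)"
      using \<open>i0 < k\<close> by (auto simp: P_def power_mult_distrib mult_ac lessThan_Suc_atMost[symmetric]
          simp del: lessThan_Suc_atMost)
    moreover have "finite {z. (\<Sum>i\<le>k - 1. (c i * N ^ i) * z ^ i) = 0}"
      by (rule polyfun_roots_finite[where k = i0]) (use assms N_nonzero in auto)
    ultimately have roots: "finite {z. P z = 0}"
      by simp
    then obtain x0 where x0: "x0 \<in> measure_support \<rho>" "P x0 \<noteq> 0"
      using infinite_imp_nonempty[OF Diff_infinite_finite[OF roots infinite_support]] by blast
    have "open (- {z. P z = 0})"
      using finite_imp_closed[OF roots] by (simp add: open_Compl)
    then obtain e where "e > 0" and e: "ball x0 e \<subseteq> - {z. P z = 0}"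
      using x0(2) open_contains_ball by blast
    have ball_pos: "emeasure \<rho> (ball x0 e) > 0"
      using x0(1) \<open>e > 0\<close> by (simp add: measure_support_def)
    have "AE \<epsilon> in \<rho>. \<epsilon> \<notin> ball x0 e"
      using g_zero by eventually_elim (use e in \<open>auto simp: g_def\<close>)
    from emeasure_eq_0_AE[OF this] have "emeasure \<rho> (ball x0 e) = 0"
      by (simp add: space_\<rho> ball_def)
    with ball_pos show False
      by simp
  qed
  moreover have "0 \<le> (\<integral>\<epsilon>. g \<epsilon> \<partial>\<rho>)"
    by (rule integral_nonneg_AE) (simp add: g_nonneg)
  ultimately show ?thesis
    by linarith
qed

lemma hankel_det_pos:
  assumes "s \<in> J"
  shows "hankel_minor (\<lambda>p. moment p s) k id id > 0"
  unfolding hankel_minor_def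
proof (rule det_pos_if_quadratic_form_pos)
  fix v :: "real vec"
  assume v: "v \<in> carrier_vec k" "v \<noteq> 0\<^sub>v k"
  then obtain i0 where "i0 < k" "v $ i0 \<noteq> 0"
    by (metis eq_vecI carrier_vecD index_zero_vec)
  then show "0 < v \<bullet> (mat k k (\<lambda>(i, j). moment (id i + id j) s) *\<^sub>v v)"
    using moment_quadratic_form_pos[OF assms, of i0 k "\<lambda>i. v $ i"] v(1)
    by (simp add: scalar_prod_mult_mat_vec[of _ k] mult_ac)
qed simp

end

section \<open>Lanczos functions\<close>

lemma sum_second_differences:
  fixes Q :: "nat \<Rightarrow> 'a :: comm_ring_1"
  shows "(\<Sum>i<Suc n. Q (i + 1) + Q (i - 1) - 2 * Q i) = Q (n + 1) - Q n"
  by (induction n) (simp_all add: algebra_simps)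

text \<open>For i = 0 the truncated difference i - 1 is 0, so with Q 0 = 0 the term j = n reduces to
  j Q 1.\<close>
lemma sum_weighted_second_differences:
  fixes Q :: "nat \<Rightarrow> 'a :: comm_ring_1"
  assumes "Q 0 = 0"
  shows "(\<Sum>j = 1..n. of_nat j * (Q (n - j + 1) + Q (n - j - 1) - 2 * Q (n - j))) = Q n"
proof -
  define G where "G i = Q (i + 1) + Q (i - 1) - 2 * Q i" for i
  have "(\<Sum>j = 1..n. of_nat j * G (n - j)) = (\<Sum>i<n. of_nat (n - i) * G i)"
    by (rule sum.reindex_bij_witness[of _ "\<lambda>j. n - j" "\<lambda>i. n - i"]) auto
  also have "\<dots> = Q n"
  proof (induction n)
    case 0
    show ?case
      using assms by simp
  next
    case (Suc n)
    have "(\<Sum>i<Suc n. of_nat (Suc n - i) * G i) = (\<Sum>i<Suc n. of_nat (n - i) * G i) + (\<Sum>i<Suc n. G i)"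
      by (simp add: sum.distrib[symmetric] Suc_diff_le algebra_simps)
    moreover have "(\<Sum>i<Suc n. of_nat (n - i) * G i) = (\<Sum>i<n. of_nat (n - i) * G i)"
      by simp
    moreover have "(\<Sum>i<Suc n. G i) = Q (n + 1) - Q n"
      unfolding G_def by (rule sum_second_differences)
    ultimately show ?case
      using Suc.IH by (simp only:) (simp add: algebra_simps)
  qed
  finally show ?thesis
    by (simp add: G_def diff_diff_left)
qed

context exp_moments_infinite_support
begin

abbreviation hankel :: "nat \<Rightarrow> real \<Rightarrow> real"
  where "hankel k s \<equiv> hankel_minor (\<lambda>p. moment p s) k id id"

definition ln_hankel_deriv :: "nat \<Rightarrow> real \<Rightarrow> real"
  where "ln_hankel_deriv k s =
    (if k = 0 then 0 else hankel_minor (\<lambda>p. moment p s) k (skip (k - 1)) id / hankel k s)"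

definition ln_hankel_deriv2 :: "nat \<Rightarrow> real \<Rightarrow> real"
  where "ln_hankel_deriv2 k s =
    (if k = 0 then 0 else hankel (k + 1) s * hankel (k - 1) s / (hankel k s)\<^sup>2)"

lemma hankel_0: "hankel 0 s = 1"
  by (simp add: hankel_minor_def)

lemma has_real_derivative_ln_hankel:
  assumes s: "s \<in> J"
  shows "((\<lambda>s. ln (hankel k s)) has_real_derivative ln_hankel_deriv k s) (at s)"
proof (cases k)
  case 0
  then show ?thesis
    by (simp add: hankel_0 ln_hankel_deriv_def)
next
  case (Suc n)
  have "((\<lambda>s. ln (hankel (Suc n) s)) has_real_derivative
      1 / hankel (Suc n) s * hankel_minor (\<lambda>p. moment p s) (Suc n) (skip n) id) (at s)"
    by (rule DERIV_chain2[OF DERIV_ln_divide[OF hankel_det_pos[OF s]]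
          has_field_derivative_hankel_det[where m = moment, OF has_real_derivative_moment[OF s]]])
  then show ?thesis
    by (simp add: Suc ln_hankel_deriv_def)
qed

text \<open>The quotient rule produces H'' H - H'^2 over H^2, and the Desnanot-Jacobi identity
  rewrites the numerator as the product of the neighbouring Hankel determinants.\<close>
lemma has_real_derivative_ln_hankel_deriv:
  assumes s: "s \<in> J"
  shows "(ln_hankel_deriv k has_real_derivative ln_hankel_deriv2 k s) (at s)"
proof (cases k)
  case 0
  moreover have "ln_hankel_deriv 0 = (\<lambda>s. 0)"
    by (simp add: ln_hankel_deriv_def fun_eq_iff)
  ultimately show ?thesis
    by (simp add: ln_hankel_deriv2_def)
next
  case (Suc n)
  have dm: "\<And>p. (moment p has_real_derivative moment (Suc p) s) (at s)"
    by (rule has_real_derivative_moment[OF s])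
  have pos: "hankel (Suc n) s > 0" "hankel (n + 2) s > 0"
    by (rule hankel_det_pos[OF s])+
  have "ln_hankel_deriv k =
      (\<lambda>s. hankel_minor (\<lambda>p. moment p s) (Suc n) (skip n) id / hankel (Suc n) s)"
    by (simp add: Suc ln_hankel_deriv_def fun_eq_iff)
  moreover have "((\<lambda>s. hankel_minor (\<lambda>p. moment p s) (Suc n) (skip n) id / hankel (Suc n) s)
      has_real_derivative
      (hankel_minor (\<lambda>p. moment p s) (Suc n) (skip n) (skip n) * hankel (Suc n) s
        - hankel_minor (\<lambda>p. moment p s) (Suc n) (skip n) id
          * hankel_minor (\<lambda>p. moment p s) (Suc n) (skip n) id)
      / (hankel (Suc n) s * hankel (Suc n) s)) (at s)"
    by (rule DERIV_divide[OF has_field_derivative_hankel_minor_skip[where m = moment, OF dm]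
          has_field_derivative_hankel_det[where m = moment, OF dm]])
       (use pos in simp)
  moreover have "hankel (n + 2) s * hankel n s =
      hankel_minor (\<lambda>p. moment p s) (Suc n) (skip n) (skip n) * hankel (Suc n) s
      - (hankel_minor (\<lambda>p. moment p s) (Suc n) (skip n) id)\<^sup>2"
    by (rule hankel_desnanot_jacobi) (use pos in simp)
  ultimately show ?thesis
    by (simp add: Suc ln_hankel_deriv2_def power2_eq_square)
qed

lemma hankel_det_eq_hankel:
  assumes "s \<in> J"
  shows "hankel_det N \<rho> k s = hankel k s"
  unfolding hankel_det_def hankel_minor_def
  by (intro arg_cong[of _ _ Determinant.det] eq_matI) (simp_all add: higher_deriv_mgf[OF assms])

lemma lanczos_L_eq_hankel:
  assumes "s \<in> J"
  shows "lanczos_L N \<rho> j s =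
    hankel (j + 1) s * hankel (j - 1) s / ((if j = 0 then 1 else N\<^sup>2) * (hankel j s)\<^sup>2)"
proof (cases j)
  case 0
  have "hankel 1 s = moment 0 s"
    by (simp add: hankel_minor_def det_single)
  then show ?thesis
    using higher_deriv_mgf[OF assms, of 0] 0 by (simp add: hankel_0)
next
  case (Suc m)
  then show ?thesis
    by (simp add: hankel_det_eq_hankel[OF assms])
qed

lemma ln_lanczos_L_eq_ln_hankel:
  assumes "s \<in> J"
  shows "ln (lanczos_L N \<rho> j s) = ln (hankel (j + 1) s) + ln (hankel (j - 1) s)
    - 2 * ln (hankel j s) - (if j = 0 then 0 else ln (N\<^sup>2))"
proof (cases j)
  case 0
  then show ?thesis
    unfolding lanczos_L_eq_hankel[OF assms] by (simp add: hankel_0)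
next
  case (Suc m)
  have "0 < hankel (j + 1) s" "0 < hankel (j - 1) s" "0 < hankel j s" "0 < N\<^sup>2"
    using hankel_det_pos[OF assms] N_nonzero by simp_all
  then have "ln (lanczos_L N \<rho> j s) = ln (hankel (j + 1) s) + ln (hankel (j - 1) s)
      - (ln (N\<^sup>2) + ln ((hankel j s)\<^sup>2))"
    unfolding lanczos_L_eq_hankel[OF assms] using Suc by (simp add: ln_div ln_mult)
  then show ?thesis
    using Suc \<open>0 < hankel j s\<close> by (simp add: ln_realpow)
qed

lemma deriv2_ln_lanczos_L:
  assumes t: "t \<in> J"
  shows "deriv (deriv (\<lambda>s. ln (lanczos_L N \<rho> j s))) t =
    ln_hankel_deriv2 (j + 1) t + ln_hankel_deriv2 (j - 1) t - 2 * ln_hankel_deriv2 j t"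
proof (rule deriv2_eqI[OF open_J t])
  fix s
  assume s: "s \<in> J"
  have "((\<lambda>s. ln (hankel (j + 1) s) + ln (hankel (j - 1) s) - 2 * ln (hankel j s)
      - (if j = 0 then 0 else ln (N\<^sup>2))) has_real_derivative
      ln_hankel_deriv (j + 1) s + ln_hankel_deriv (j - 1) s - 2 * ln_hankel_deriv j s - 0) (at s)"
    by (intro DERIV_diff DERIV_add DERIV_cmult DERIV_const has_real_derivative_ln_hankel[OF s])
  then show "((\<lambda>s. ln (lanczos_L N \<rho> j s)) has_real_derivative
      ln_hankel_deriv (j + 1) s + ln_hankel_deriv (j - 1) s - 2 * ln_hankel_deriv j s) (at s)"
    using ln_lanczos_L_eq_ln_hankel
    by (auto intro: has_field_derivative_transform_within_open[OF _ open_J s])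
next
  show "((\<lambda>s. ln_hankel_deriv (j + 1) s + ln_hankel_deriv (j - 1) s - 2 * ln_hankel_deriv j s)
      has_real_derivative
      ln_hankel_deriv2 (j + 1) t + ln_hankel_deriv2 (j - 1) t - 2 * ln_hankel_deriv2 j t) (at t)"
    by (intro DERIV_diff DERIV_add DERIV_cmult has_real_derivative_ln_hankel_deriv[OF t])
qed

end

theorem theorem1:
  fixes N :: real and \<rho> :: "real measure" and J :: "real set"
    and n :: nat and t :: real
  assumes N_pos: "N > 0"
    and borel: "sets \<rho> = sets borel"
    and inf_supp: "infinite (measure_support \<rho>)"
    and J_open: "open J" and J_interval: "is_interval J" and J_ne: "J \<noteq> {}"
    and finite_mgf: "\<forall>s\<in>J. integrable \<rho> (\<lambda>\<epsilon>. exp (s * N * \<epsilon>))"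
    and n_ge: "n \<ge> 1"
    and t_in: "t \<in> J"
  shows "lanczos_L N \<rho> n t =
    (1 / N) * (\<Sum>j = 1..n. (real j / N) *
       deriv (deriv (\<lambda>s. ln (lanczos_L N \<rho> (n - j) s))) t)"
proof -
  \<comment> \<open>Every step is local in t, so of the hypotheses on J only openness is needed.\<close>
  interpret exp_moments_infinite_support N \<rho> J
    using N_pos borel inf_supp J_open finite_mgf by unfold_locales auto
  let ?Q = "\<lambda>k. ln_hankel_deriv2 k t"
  have "(\<Sum>j = 1..n. (real j / N) * deriv (deriv (\<lambda>s. ln (lanczos_L N \<rho> (n - j) s))) t)
      = (\<Sum>j = 1..n. real j * (?Q (n - j + 1) + ?Q (n - j - 1) - 2 * ?Q (n - j))) / N"
    by (simp add: deriv2_ln_lanczos_L[OF t_in] sum_divide_distrib)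
  also have "(\<Sum>j = 1..n. real j * (?Q (n - j + 1) + ?Q (n - j - 1) - 2 * ?Q (n - j))) = ?Q n"
    by (rule sum_weighted_second_differences) (simp add: ln_hankel_deriv2_def)
  also have "?Q n = N\<^sup>2 * lanczos_L N \<rho> n t"
    using n_ge N_pos by (simp add: lanczos_L_eq_hankel[OF t_in] ln_hankel_deriv2_def)
  finally show ?thesis
    using N_pos by (simp add: power2_eq_square)
qed

end
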